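(* Let $M>0$, $0<a<M$, $\mu>0$, $m\in\mathbb{Z}\setminus\{0\}$, $n\in\{0,1,2,\dots\}$, $l\in\{|m|,|m|+1,\dots\}$, and define $$\alpha_1=\frac{ma}{\mu M^2},\quad \alpha_2=\frac{2n+1}{\mu M}\sqrt{1-\frac{a^2}{M^2}},\quad \alpha=\alpha_1-i\alpha_2,\quad \epsilon=2\sqrt{1-\frac{a^2}{M^2}},\quad \beta=6-\frac{l(l+1)}{\mu^2M^2},$$ and, for $\beta\geq0$, $$q(z)=z^4+\frac{4z}{\beta+\epsilon}\left[(2+\epsilon)(z^2+1)+\alpha(z^2-1)\right]+2\,\frac{16-\beta+3\epsilon}{\beta+\epsilon}\,z^2+1,\quad z\in\mathbb{C}.$$ If $\alpha_1>2+\epsilon$ and $0<\beta<8+\epsilon$, then the open first quadrant $\{z\in\mathbb{C}:\mathrm{Re}(z)>0,\ \mathrm{Im}(z)>0\}$ contains precisely $1$ root of $q$. *)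

theory Defs
  imports "HOL-Analysis.Analysis" "HOL-Computational_Algebra.Polynomial"
begin

definition alpha1 :: "real \<Rightarrow> real \<Rightarrow> real \<Rightarrow> int \<Rightarrow> real" where
  "alpha1 M a \<mu> m = of_int m * a / (\<mu> * M^2)"

definition alpha2 :: "real \<Rightarrow> real \<Rightarrow> real \<Rightarrow> nat \<Rightarrow> real" where
  "alpha2 M a \<mu> n = (2 * real n + 1) / (\<mu> * M) * sqrt (1 - a^2 / M^2)"

definition epsK :: "real \<Rightarrow> real \<Rightarrow> real" where
  "epsK M a = 2 * sqrt (1 - a^2 / M^2)"

definition betaK :: "real \<Rightarrow> real \<Rightarrow> nat \<Rightarrow> real" where
  "betaK M \<mu> l = 6 - real l * (real l + 1) / (\<mu>^2 * M^2)"

definition qpoly :: "complex \<Rightarrow> real \<Rightarrow> real \<Rightarrow> complex poly" where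
  "qpoly \<alpha> \<beta> \<epsilon> =
     monom 1 4
   + smult (4 / complex_of_real (\<beta> + \<epsilon>))
       (monom (complex_of_real (2 + \<epsilon>) + \<alpha>) 3 + monom (complex_of_real (2 + \<epsilon>) - \<alpha>) 1)
   + monom (complex_of_real (2 * (16 - \<beta> + 3 * \<epsilon>) / (\<beta> + \<epsilon>))) 2
   + 1"

lemma poly_qpoly:
  "poly (qpoly \<alpha> \<beta> \<epsilon>) z =
     z^4 + (4 * z / complex_of_real (\<beta> + \<epsilon>)) *
        (complex_of_real (2 + \<epsilon>) * (z^2 + 1) + \<alpha> * (z^2 - 1))
     + complex_of_real (2 * (16 - \<beta> + 3 * \<epsilon>) / (\<beta> + \<epsilon>)) * z^2 + 1"
  by (simp add: qpoly_def poly_monom algebra_simps power_numeral_reduce)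

end

theory Submission
  imports Defs "HOL-Complex_Analysis.Complex_Analysis"
begin

(* Count the zeros of q in the triangle with vertices 0, R, i R by the argument principle,
   comparing q with z^4 + 1 along the straight-line homotopy. On the nonnegative real axis
   Im q(x) = -4 alpha2 x (x^2 - 1) / (beta + eps) vanishes only at x = 0 and x = 1, where q is
   positive; on the nonnegative imaginary axis Im q(i y) < 0 for y > 0 because alpha1 > 2 + eps.
   So on both legs q avoids the closed negative real axis while z^4 + 1 is positive, and on the
   hypotenuse z^4 dominates the remaining terms once R is large. The homotopy therefore never
   vanishes on the contour, and q has as many zeros inside as z^4 + 1, namely the simple zero
   exp (i pi / 4). Only alpha1 > 2 + eps, alpha2 > 0 and beta + eps > 0 enter. *)

lemma zorder_poly:
  fixes p :: "complex poly"
  assumes "p \<noteq> 0"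
  shows "zorder (poly p) z = int (order z p)"
proof -
  obtain r where r: "p = [:-z, 1:] ^ order z p * r" and nd: "\<not> [:-z, 1:] dvd r"
    using order_decomp[OF assms] by blast
  have "poly r z \<noteq> 0" using nd by (simp add: poly_eq_0_iff_dvd)
  show ?thesis
  proof (rule zorder_eqI[of UNIV z "poly r"])
    fix w :: complex
    have "poly p w = poly r w * (w - z) ^ order z p"
      by (subst r) (simp add: poly_mult poly_power algebra_simps)
    then show "poly p w = poly r w * (w - z) powi int (order z p)"
      by (simp add: power_int_def)
  qed (use \<open>poly r z \<noteq> 0\<close> in \<open>auto intro: holomorphic_intros\<close>)
qed

lemma contour_integral_logderiv_eq_winding_number:
  fixes f :: "complex \<Rightarrow> complex"
  assumes holo: "f holomorphic_on UNIV" and "valid_path \<gamma>"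
    and nz: "\<And>w. w \<in> path_image \<gamma> \<Longrightarrow> f w \<noteq> 0"
  shows "contour_integral \<gamma> (\<lambda>w. deriv f w / f w) = 2 * pi * \<i> * winding_number (f \<circ> \<gamma>) 0"
proof -
  obtain spikes where "finite spikes" and spikes: "\<forall>t\<in>{0..1} - spikes. \<gamma> differentiable at t"
    using \<open>valid_path \<gamma>\<close>
    by (auto simp: valid_path_def piecewise_C1_differentiable_on_def C1_differentiable_on_eq)
  have "valid_path (f \<circ> \<gamma>)"
    by (rule valid_path_compose_holomorphic[OF \<open>valid_path \<gamma>\<close> holo]) auto
  moreover have "0 \<notin> path_image (f \<circ> \<gamma>)"
    using nz by (auto simp: path_image_compose)
  ultimately have "((\<lambda>w. 1 / w) has_contour_integral 2 * pi * \<i> * winding_number (f \<circ> \<gamma>) 0) (f \<circ> \<gamma>)"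
    using has_contour_integral_winding_number[of "f \<circ> \<gamma>" 0] by simp
  moreover have "vector_derivative (f \<circ> \<gamma>) (at t) = vector_derivative \<gamma> (at t) * deriv f (\<gamma> t)"
    if "t \<in> {0..1} - spikes" for t
    using that spikes holo holomorphic_on_imp_differentiable_at
    by (intro vector_derivative_chain_at_general) auto
  then have "((\<lambda>w. 1 / w) has_contour_integral c) (f \<circ> \<gamma>)
           \<longleftrightarrow> ((\<lambda>w. deriv f w / f w) has_contour_integral c) \<gamma>" for c
    unfolding has_contour_integral
    by (force intro!: has_integral_spike_eq[OF negligible_finite, OF \<open>finite spikes\<close>])
  ultimately show ?thesis
    using contour_integral_unique by blast
qed

lemma winding_number_poly_comp:
  fixes p :: "complex poly"
  assumes "p \<noteq> 0" "valid_path \<gamma>" "pathfinish \<gamma> = pathstart \<gamma>"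
    and nz: "\<And>w. w \<in> path_image \<gamma> \<Longrightarrow> poly p w \<noteq> 0"
  shows "winding_number (poly p \<circ> \<gamma>) 0 =
           (\<Sum>z | poly p z = 0. winding_number \<gamma> z * of_nat (order z p))"
proof -
  have "contour_integral \<gamma> (\<lambda>w. deriv (poly p) w * 1 / poly p w) =
          2 * pi * \<i> * (\<Sum>z\<in>{w\<in>UNIV. poly p w = 0 \<or> w \<in> {}}. winding_number \<gamma> z * 1 * zorder (poly p) z)"
    using assms poly_roots_finite[OF \<open>p \<noteq> 0\<close>]
    by (intro argument_principle) (auto intro: holomorphic_intros)
  with contour_integral_logderiv_eq_winding_number[of "poly p" \<gamma>] assms
  show ?thesis
    by (simp add: zorder_poly[OF \<open>p \<noteq> 0\<close>] holomorphic_intros)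
qed

(* Unlike Rouche_theorem, this only asks the segment between the two values to avoid 0,
   which is all that holds on the coordinate axes below. *)
lemma poly_roots_winding_sum_linear_eq:
  fixes p q :: "complex poly"
  assumes "p \<noteq> 0" "q \<noteq> 0" "valid_path \<gamma>" "pathfinish \<gamma> = pathstart \<gamma>"
    and seg: "\<And>w. w \<in> path_image \<gamma> \<Longrightarrow> 0 \<notin> closed_segment (poly p w) (poly q w)"
  shows "(\<Sum>z | poly p z = 0. winding_number \<gamma> z * of_nat (order z p)) =
         (\<Sum>z | poly q z = 0. winding_number \<gamma> z * of_nat (order z q))"
proof -
  have "path \<gamma>" using \<open>valid_path \<gamma>\<close> valid_path_imp_path by blast
  have "winding_number (poly q \<circ> \<gamma>) 0 = winding_number (poly p \<circ> \<gamma>) 0"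
  proof (rule winding_number_loops_linear_eq)
    fix t :: real assume "t \<in> {0..1}"
    then show "0 \<notin> closed_segment ((poly p \<circ> \<gamma>) t) ((poly q \<circ> \<gamma>) t)"
      using seg by (simp add: path_image_def)
  qed (use \<open>path \<gamma>\<close> assms(4) in
        \<open>auto intro!: path_continuous_image continuous_intros
               simp: pathfinish_compose pathstart_compose\<close>)
  moreover have "poly p w \<noteq> 0" "poly q w \<noteq> 0" if "w \<in> path_image \<gamma>" for w
    using seg[OF that] by auto
  ultimately show ?thesis
    using assms by (simp add: winding_number_poly_comp)
qed

definition quadrant_triangle :: "real \<Rightarrow> real \<Rightarrow> complex" where
  "quadrant_triangle R =
     linepath 0 (of_real R) +++ linepath (of_real R) (\<i> * of_real R) +++ linepath (\<i> * of_real R) 0"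

lemma valid_path_quadrant_triangle [simp]: "valid_path (quadrant_triangle R)"
  unfolding quadrant_triangle_def by (intro valid_path_join valid_path_linepath) simp_all

lemma pathstart_quadrant_triangle [simp]: "pathstart (quadrant_triangle R) = 0"
  and pathfinish_quadrant_triangle [simp]: "pathfinish (quadrant_triangle R) = 0"
  unfolding quadrant_triangle_def by simp_all

lemma path_image_quadrant_triangle:
  "path_image (quadrant_triangle R) =
     closed_segment 0 (of_real R) \<union> closed_segment (of_real R) (\<i> * of_real R) \<union>
     closed_segment (\<i> * of_real R) 0"
  unfolding quadrant_triangle_def by (simp add: path_image_join Un_assoc)

lemma quadrant_triangle_boundary_cases:
  assumes "R \<ge> 0" "w \<in> path_image (quadrant_triangle R)"
  obtains (real_axis) x where "x \<ge> 0" "w = of_real x"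
    | (imag_axis) y where "y \<ge> 0" "w = \<i> * of_real y"
    | (hypotenuse) "Re w + Im w = R"
  using assms(2) unfolding path_image_quadrant_triangle
proof (elim UnE)
  assume "w \<in> closed_segment 0 (of_real R)"
  then obtain u where "0 \<le> u" "w = of_real (u * R)"
    by (auto simp: in_segment scaleR_conv_of_real)
  with \<open>R \<ge> 0\<close> show thesis by (intro real_axis[of "u * R"]) simp_all
next
  assume "w \<in> closed_segment (\<i> * of_real R) 0"
  then obtain u where "u \<le> 1" "w = \<i> * of_real ((1 - u) * R)"
    by (auto simp: in_segment scaleR_conv_of_real)
  with \<open>R \<ge> 0\<close> show thesis by (intro imag_axis[of "(1 - u) * R"]) simp_all
next
  assume "w \<in> closed_segment (of_real R) (\<i> * of_real R)"
  then obtain u where "w = (1 - u) *\<^sub>R of_real R + u *\<^sub>R (\<i> * of_real R)"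
    by (auto simp: in_segment)
  then have "Re w + Im w = (1 - u) * R + u * R" by simp
  then show thesis by (intro hypotenuse) (simp add: algebra_simps)
qed

lemma convex_hull_quadrant_triangle:
  assumes "R > 0"
  shows "convex hull {0, of_real R, \<i> * of_real R} = {w. Re w \<ge> 0 \<and> Im w \<ge> 0 \<and> Re w + Im w \<le> R}"
proof (intro set_eqI iffI)
  fix w assume "w \<in> convex hull {0, of_real R, \<i> * of_real R}"
  then obtain u v t where "0 \<le> v" "0 \<le> t" "u + v + t = 1" "0 \<le> u"
    and w: "w = u *\<^sub>R 0 + v *\<^sub>R of_real R + t *\<^sub>R (\<i> * of_real R)"
    by (auto simp: convex_hull_3)
  moreover have "Re w = v * R" "Im w = t * R"
    using w by (simp_all add: scaleR_conv_of_real)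
  ultimately show "w \<in> {w. Re w \<ge> 0 \<and> Im w \<ge> 0 \<and> Re w + Im w \<le> R}"
    using assms mult_right_mono[of "v + t" 1 R] by (simp add: distrib_right)
next
  fix w assume "w \<in> {w. Re w \<ge> 0 \<and> Im w \<ge> 0 \<and> Re w + Im w \<le> R}"
  then have "Re w \<ge> 0" "Im w \<ge> 0" "Re w / R + Im w / R \<le> 1"
    using assms by (auto simp: add_divide_distrib[symmetric])
  then show "w \<in> convex hull {0, of_real R, \<i> * of_real R}"
    unfolding convex_hull_3
  proof (intro CollectI exI conjI)
    show "w = (1 - Re w / R - Im w / R) *\<^sub>R 0 + (Re w / R) *\<^sub>R of_real R +
                (Im w / R) *\<^sub>R (\<i> * of_real R)"
      using assms by (simp add: complex_eq_iff scaleR_conv_of_real)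
  qed (use assms in auto)
qed

lemma winding_number_quadrant_triangle_outside:
  assumes "R > 0" "\<not> (Re w \<ge> 0 \<and> Im w \<ge> 0 \<and> Re w + Im w \<le> R)"
  shows "winding_number (quadrant_triangle R) w = 0"
proof (rule winding_number_zero_outside)
  have "closed_segment a b \<subseteq> convex hull {0, of_real R, \<i> * of_real R}"
    if "a \<in> {0, of_real R, \<i> * of_real R}" "b \<in> {0, of_real R, \<i> * of_real R}" for a b
    using that by (simp add: segment_convex_hull hull_mono)
  then show "path_image (quadrant_triangle R) \<subseteq> convex hull {0, of_real R, \<i> * of_real R}"
    unfolding path_image_quadrant_triangle by auto
  show "w \<notin> convex hull {0, of_real R, \<i> * of_real R}"
    using convex_hull_quadrant_triangle[OF assms(1)] assms(2) by simp
qed (auto intro: valid_path_imp_path)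

lemma winding_number_quadrant_triangle_inside:
  assumes "R > 0" "Re w > 0" "Im w > 0" "Re w + Im w < R"
  shows "winding_number (quadrant_triangle R) w = 1"
proof -
  define T where "T = {w. 0 < Re w} \<inter> {w. 0 < Im w} \<inter> {w. (1 + \<i>) \<bullet> w < R}"
  have "open T"
    unfolding T_def by (intro open_Int open_halfspace_Re_gt open_halfspace_Im_gt open_halfspace_lt)
  moreover have "T \<subseteq> convex hull {0, of_real R, \<i> * of_real R}"
    unfolding T_def convex_hull_quadrant_triangle[OF assms(1)] by (auto simp: inner_complex_def)
  ultimately have "T \<subseteq> interior (convex hull {0, of_real R, \<i> * of_real R})"
    using interior_maximal by blast
  moreover have "w \<in> T"
    unfolding T_def using assms by (simp add: inner_complex_def)
  ultimately have "winding_number (quadrant_triangle R) w =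
                     (if 0 < Im ((of_real R - 0) * cnj (of_real R - w)) then 1 else -1)"
    unfolding quadrant_triangle_def by (intro winding_number_triangle) blast
  with assms show ?thesis by simp
qed

lemma poly_roots_winding_sum_quadrant_triangle:
  fixes p :: "complex poly"
  assumes "R > 0"
    and real_axis: "\<And>x. x \<ge> 0 \<Longrightarrow> poly p (of_real x) \<noteq> 0"
    and imag_axis: "\<And>y. y \<ge> 0 \<Longrightarrow> poly p (\<i> * of_real y) \<noteq> 0"
    and small: "\<And>z. poly p z = 0 \<Longrightarrow> 2 * cmod z < R"
  shows "(\<Sum>z | poly p z = 0. winding_number (quadrant_triangle R) z * of_nat (order z p)) =
           of_nat (\<Sum>z | poly p z = 0 \<and> Re z > 0 \<and> Im z > 0. order z p)"
proof -
  have "p \<noteq> 0" using real_axis[of 0] by auto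
  have "winding_number (quadrant_triangle R) z * of_nat (order z p) =
          (if Re z > 0 \<and> Im z > 0 then of_nat (order z p) else 0)" if "poly p z = 0" for z
  proof (cases "Re z > 0 \<and> Im z > 0")
    case True
    moreover have "Re z + Im z < R"
      using small[OF that] abs_Re_le_cmod[of z] abs_Im_le_cmod[of z] by linarith
    ultimately show ?thesis
      using \<open>R > 0\<close> by (simp add: winding_number_quadrant_triangle_inside)
  next
    case False
    have "\<not> (Re z \<ge> 0 \<and> Im z \<ge> 0)"
    proof
      assume "Re z \<ge> 0 \<and> Im z \<ge> 0"
      moreover from this False have "z = of_real (Re z) \<or> z = \<i> * of_real (Im z)"
        by (auto simp: complex_eq_iff)
      ultimately show False
        using that real_axis[of "Re z"] imag_axis[of "Im z"] by auto
    qed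
    with False show ?thesis
      using winding_number_quadrant_triangle_outside[OF \<open>R > 0\<close>, of z] by auto
  qed
  then have "(\<Sum>z | poly p z = 0. winding_number (quadrant_triangle R) z * of_nat (order z p)) =
               (\<Sum>z | poly p z = 0. if Re z > 0 \<and> Im z > 0 then of_nat (order z p) else 0)"
    by (intro sum.cong) auto
  also have "\<dots> = (\<Sum>z | poly p z = 0 \<and> Re z > 0 \<and> Im z > 0. of_nat (order z p))"
    using poly_roots_finite[OF \<open>p \<noteq> 0\<close>] by (subst sum.inter_filter[symmetric]) (auto intro: sum.cong)
  finally show ?thesis by simp
qed

lemma zero_notin_closed_segment_if_norm_diff_less:
  fixes f g :: complex
  assumes "cmod (g - f) < cmod f"
  shows "0 \<notin> closed_segment f g"
proof
  assume "0 \<in> closed_segment f g"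
  then have "dist 0 f \<le> dist f g" by (rule dist_in_closed_segment[THEN conjunct1])
  with assms show False by (simp add: dist_norm norm_minus_commute)
qed

lemma zero_notin_closed_segment_pos_real:
  fixes g :: complex
  assumes "r > 0" "g \<notin> \<real>\<^sub>\<le>\<^sub>0"
  shows "0 \<notin> closed_segment (of_real r) g"
proof
  assume "0 \<in> closed_segment (of_real r) g"
  then obtain u where u: "0 \<le> u" "u \<le> 1" and "0 = (1 - u) *\<^sub>R of_real r + u *\<^sub>R g"
    by (auto simp: in_segment)
  then have re: "0 = (1 - u) * r + u * Re g" and im: "0 = u * Im g"
    by (simp_all add: complex_eq_iff)
  have "u > 0" using re u \<open>r > 0\<close> by (cases "u = 0") auto
  moreover have "(1 - u) * r \<ge> 0" using u \<open>r > 0\<close> by simp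
  then have "u * Re g \<le> 0" using re by linarith
  ultimately have "Re g \<le> 0" "Im g = 0" using im by (simp_all add: mult_le_0_iff)
  with assms(2) show False by (simp add: complex_nonpos_Reals_iff)
qed

lemma norm_lower_terms_less_norm_quartic:
  fixes c1 c2 c3 z :: complex
  assumes "cmod c3 + cmod c2 + cmod c1 + 2 \<le> cmod z"
  shows "cmod (c3 * z^3 + c2 * z^2 + c1 * z) < cmod (z^4 + 1)"
proof -
  define r where "r = cmod z"
  define S where "S = cmod c3 + cmod c2 + cmod c1"
  have "S \<ge> 0" unfolding S_def by simp
  then have "r \<ge> 2" "r - S \<ge> 2" using assms unfolding r_def S_def by linarith+
  have "r^2 \<le> r^3" "r \<le> r^3" "1 \<le> r^3"
    using \<open>r \<ge> 2\<close> by (simp_all add: power_increasing[of 2 3 r] power_increasing[of 1 3 r, simplified] one_le_power)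
  have "cmod (c3 * z^3 + c2 * z^2 + c1 * z) \<le> cmod c3 * r^3 + cmod c2 * r^2 + cmod c1 * r"
    unfolding r_def by (metis norm_mult norm_power norm_triangle_le norm_triangle_ineq add_mono order_refl)
  also have "\<dots> \<le> S * r^3"
    unfolding S_def distrib_right using \<open>r^2 \<le> r^3\<close> \<open>r \<le> r^3\<close>
    by (intro add_mono mult_left_mono) simp_all
  also have "\<dots> < r^4 - 1"
  proof -
    have "r^3 * 2 \<le> r^3 * (r - S)"
      using \<open>r - S \<ge> 2\<close> \<open>1 \<le> r^3\<close> by (intro mult_left_mono) linarith+
    with \<open>1 \<le> r^3\<close> show ?thesis by (simp add: algebra_simps eval_nat_numeral)
  qed
  also have "\<dots> \<le> cmod (z^4 + 1)"
    using norm_triangle_ineq4[of "z^4 + 1" 1] unfolding r_def by (simp add: norm_power)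
  finally show ?thesis .
qed

definition quartic_plus_one :: "complex poly" where
  "quartic_plus_one = monom 1 4 + 1"

lemma poly_quartic_plus_one: "poly quartic_plus_one z = z^4 + 1"
  by (simp add: quartic_plus_one_def poly_monom)

lemma order_quartic_plus_one:
  assumes "poly quartic_plus_one z = 0"
  shows "order z quartic_plus_one = 1"
proof -
  have "pderiv quartic_plus_one = monom 4 3"
    by (simp add: quartic_plus_one_def pderiv_add pderiv_monom)
  then have "rsquarefree quartic_plus_one"
    by (auto simp: rsquarefree_roots poly_quartic_plus_one poly_monom)
  moreover have "quartic_plus_one \<noteq> 0" "order z quartic_plus_one \<noteq> 0"
    using assms poly_quartic_plus_one[of 0] by (auto simp: order_root)
  ultimately show ?thesis by (metis rsquarefree_def)
qed

lemma quartic_plus_one_root_first_quadrant: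
  assumes "z^4 + 1 = 0" "Re z \<ge> 0" "Im z \<ge> 0"
  shows "z = Complex (sqrt 2 / 2) (sqrt 2 / 2)"
proof -
  have "(z^2 - \<i>) * (z^2 + \<i>) = z^4 + 1"
    by (simp add: algebra_simps power2_eq_square eval_nat_numeral)
  moreover have "Im (z^2) \<ge> 0"
    using assms(2,3) by (simp add: power2_eq_square)
  moreover have "z^2 + \<i> \<noteq> 0"
  proof
    assume "z^2 + \<i> = 0"
    then have "Im (z^2) = -1" by (simp add: complex_eq_iff)
    with \<open>Im (z^2) \<ge> 0\<close> show False by simp
  qed
  ultimately have "z^2 = \<i>"
    using assms(1) by simp
  then have "Re z ^ 2 = Im z ^ 2" "2 * Re z * Im z = 1"
    by (simp_all add: power2_eq_square complex_eq_iff mult.commute)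
  then have "Re z = Im z"
    using assms(2,3) power2_eq_iff_nonneg by blast
  with \<open>2 * Re z * Im z = 1\<close> have "Re z ^ 2 = (sqrt 2 / 2) ^ 2"
    by (simp add: power2_eq_square)
  then have "Re z = sqrt 2 / 2"
    using assms(2) power2_eq_iff_nonneg by simp
  with \<open>Re z = Im z\<close> show ?thesis by (simp add: complex_eq_iff)
qed

lemma quartic_plus_one_first_quadrant_root_count:
  "(\<Sum>z | poly quartic_plus_one z = 0 \<and> Re z > 0 \<and> Im z > 0. order z quartic_plus_one) = 1"
proof -
  define w :: complex where "w = Complex (sqrt 2 / 2) (sqrt 2 / 2)"
  have "w^4 = (w^2)^2" by (simp flip: power_mult)
  also have "w^2 = \<i>" by (simp add: w_def power2_eq_square complex_eq_iff)
  finally have "poly quartic_plus_one w = 0" by (simp add: poly_quartic_plus_one)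
  have "{z. poly quartic_plus_one z = 0 \<and> Re z > 0 \<and> Im z > 0} = {w}"
  proof (intro equalityI subsetI)
    fix z assume "z \<in> {z. poly quartic_plus_one z = 0 \<and> Re z > 0 \<and> Im z > 0}"
    then have "z^4 + 1 = 0" "Re z \<ge> 0" "Im z \<ge> 0" by (auto simp: poly_quartic_plus_one)
    then show "z \<in> {w}" unfolding w_def by (simp add: quartic_plus_one_root_first_quadrant)
  qed (use \<open>poly quartic_plus_one w = 0\<close> in \<open>simp add: w_def\<close>)
  with \<open>poly quartic_plus_one w = 0\<close> show ?thesis
    by (simp add: order_quartic_plus_one)
qed

lemma poly_quartic_plus_one_axes:
  "poly quartic_plus_one (of_real x) = of_real (x^4 + 1)"
  "poly quartic_plus_one (\<i> * of_real x) = of_real (x^4 + 1)"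
  by (simp_all add: poly_quartic_plus_one power_mult_distrib)

lemma quartic_plus_one_winding_sum_quadrant_triangle:
  assumes "R > 2"
  shows "(\<Sum>z | poly quartic_plus_one z = 0.
            winding_number (quadrant_triangle R) z * of_nat (order z quartic_plus_one)) = 1"
proof -
  have "x^4 + 1 > (0::real)" if "x \<ge> 0" for x
    using that by (simp add: add_nonneg_pos)
  then have axes: "poly quartic_plus_one (of_real x) \<noteq> 0" "poly quartic_plus_one (\<i> * of_real x) \<noteq> 0"
    if "x \<ge> 0" for x
    using that unfolding poly_quartic_plus_one_axes of_real_eq_0_iff by force+
  have "2 * cmod z < R" if "poly quartic_plus_one z = 0" for z
  proof -
    have "z^4 = -1"
      using that by (simp add: poly_quartic_plus_one eq_neg_iff_add_eq_0)
    then have "cmod z ^ 4 = 1"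
      by (metis norm_power norm_minus_cancel norm_one)
    then have "cmod z = 1"
      using power_eq_iff_eq_base[of 4 "cmod z" 1] by simp
    with assms show ?thesis by simp
  qed
  with assms axes show ?thesis
    by (simp add: poly_roots_winding_sum_quadrant_triangle quartic_plus_one_first_quadrant_root_count)
qed

lemma zero_notin_segment_quartic_plus_one_quadrant_triangle:
  fixes p :: "complex poly"
  assumes "R \<ge> 0"
    and real_axis: "\<And>x. x \<ge> 0 \<Longrightarrow> poly p (of_real x) \<notin> \<real>\<^sub>\<le>\<^sub>0"
    and imag_axis: "\<And>y. y \<ge> 0 \<Longrightarrow> poly p (\<i> * of_real y) \<notin> \<real>\<^sub>\<le>\<^sub>0"
    and dominant: "\<And>z. R \<le> 2 * cmod z \<Longrightarrow>
                     cmod (poly p z - poly quartic_plus_one z) < cmod (poly quartic_plus_one z)"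
    and "w \<in> path_image (quadrant_triangle R)"
  shows "0 \<notin> closed_segment (poly quartic_plus_one w) (poly p w)"
  using assms(1,5)
proof (cases rule: quadrant_triangle_boundary_cases)
  case (real_axis x)
  then show ?thesis
    using assms(2) zero_notin_closed_segment_pos_real[of "x^4 + 1"]
    by (simp add: poly_quartic_plus_one_axes add_nonneg_pos)
next
  case (imag_axis y)
  then show ?thesis
    using assms(3) zero_notin_closed_segment_pos_real[of "y^4 + 1"]
    by (simp add: poly_quartic_plus_one_axes add_nonneg_pos)
next
  case hypotenuse
  then have "R \<le> 2 * cmod w"
    using complex_Re_le_cmod[of w] abs_le_D1[OF abs_Im_le_cmod[of w]] by simp
  then show ?thesis
    by (intro zero_notin_closed_segment_if_norm_diff_less dominant)
qed

lemma poly_monic_quartic_constant_one: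
  fixes p :: "complex poly"
  assumes "degree p = 4" "lead_coeff p = 1" "coeff p 0 = 1"
  shows "poly p z = z^4 + coeff p 3 * z^3 + coeff p 2 * z^2 + coeff p 1 * z + 1"
  using assms by (simp add: poly_altdef eval_nat_numeral atMost_Suc algebra_simps)

lemma quartic_first_quadrant_root_count:
  fixes p :: "complex poly"
  assumes "degree p = 4" "lead_coeff p = 1" "coeff p 0 = 1"
    and real_axis: "\<And>x. x \<ge> 0 \<Longrightarrow> poly p (of_real x) \<notin> \<real>\<^sub>\<le>\<^sub>0"
    and imag_axis: "\<And>y. y \<ge> 0 \<Longrightarrow> poly p (\<i> * of_real y) \<notin> \<real>\<^sub>\<le>\<^sub>0"
  shows "(\<Sum>z | poly p z = 0 \<and> Re z > 0 \<and> Im z > 0. order z p) = 1"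
proof -
  define S where "S = cmod (coeff p 3) + cmod (coeff p 2) + cmod (coeff p 1)"
  define R where "R = 2 * (S + 2)"
  have "S \<ge> 0" unfolding S_def by simp
  then have "R > 2" unfolding R_def by simp
  have dominant: "cmod (poly p z - poly quartic_plus_one z) < cmod (poly quartic_plus_one z)"
    if "R \<le> 2 * cmod z" for z
  proof -
    have "poly p z - poly quartic_plus_one z = coeff p 3 * z^3 + coeff p 2 * z^2 + coeff p 1 * z"
      by (simp add: poly_quartic_plus_one poly_monic_quartic_constant_one[OF assms(1-3)])
    with that show ?thesis
      using norm_lower_terms_less_norm_quartic[of "coeff p 3" "coeff p 2" "coeff p 1" z]
      by (simp add: R_def S_def poly_quartic_plus_one)
  qed
  have p_small: "2 * cmod z < R" if "poly p z = 0" for z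
    using dominant[of z] that by fastforce
  have p_axes: "poly p (of_real x) \<noteq> 0" "poly p (\<i> * of_real x) \<noteq> 0" if "x \<ge> 0" for x
    using real_axis[OF that] imag_axis[OF that] by (metis nonpos_Reals_zero_I)+
  have "p \<noteq> 0" "quartic_plus_one \<noteq> 0"
    using assms(1) poly_quartic_plus_one[of 0] by auto
  have "of_nat (\<Sum>z | poly p z = 0 \<and> Re z > 0 \<and> Im z > 0. order z p) =
          (\<Sum>z | poly p z = 0. winding_number (quadrant_triangle R) z * of_nat (order z p))"
    using \<open>R > 2\<close> p_axes p_small by (simp add: poly_roots_winding_sum_quadrant_triangle)
  also have "\<dots> = (\<Sum>z | poly quartic_plus_one z = 0.
                     winding_number (quadrant_triangle R) z * of_nat (order z quartic_plus_one))"
    using \<open>R > 2\<close> \<open>p \<noteq> 0\<close> \<open>quartic_plus_one \<noteq> 0\<close> real_axis imag_axis dominant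
    by (intro poly_roots_winding_sum_linear_eq[symmetric]
        zero_notin_segment_quartic_plus_one_quadrant_triangle) simp_all
  also have "\<dots> = 1"
    using \<open>R > 2\<close> by (rule quartic_plus_one_winding_sum_quadrant_triangle)
  finally show ?thesis by (simp only: of_nat_eq_1_iff)
qed

lemma coeff_qpoly:
  "coeff (qpoly \<alpha> \<beta> \<epsilon>) 0 = 1" "coeff (qpoly \<alpha> \<beta> \<epsilon>) 4 = 1"
  "n > 4 \<Longrightarrow> coeff (qpoly \<alpha> \<beta> \<epsilon>) n = 0"
  by (simp_all add: qpoly_def coeff_monom)

lemma degree_qpoly: "degree (qpoly \<alpha> \<beta> \<epsilon>) = 4"
  using coeff_qpoly by (intro order.antisym degree_le le_degree) auto

lemma poly_qpoly_scaled:
  "poly (qpoly \<alpha> \<beta> \<epsilon>) z =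
     z^4 + of_real (4 / (\<beta> + \<epsilon>)) * z * (of_real (2 + \<epsilon>) * (z^2 + 1) + \<alpha> * (z^2 - 1))
     + of_real (2 * (16 - \<beta> + 3 * \<epsilon>) / (\<beta> + \<epsilon>)) * z^2 + 1"
  by (simp add: poly_qpoly)

lemma poly_qpoly_real_axis:
  fixes a1 a2 b e x :: real
  defines "k \<equiv> 4 / (b + e)" and "c \<equiv> 2 * (16 - b + 3 * e) / (b + e)"
  shows "poly (qpoly (of_real a1 - \<i> * of_real a2) b e) (of_real x) =
     of_real (x^4 + k * x * ((2 + e) * (x^2 + 1) + a1 * (x^2 - 1)) + c * x^2 + 1)
     + \<i> * of_real (- k * x * a2 * (x^2 - 1))"
  unfolding poly_qpoly_scaled k_def[symmetric] c_def[symmetric]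
  unfolding of_real_add of_real_mult of_real_power of_real_diff of_real_1 of_real_numeral of_real_minus
  by algebra

lemma poly_qpoly_imag_axis:
  fixes a1 a2 b e y :: real
  defines "k \<equiv> 4 / (b + e)" and "c \<equiv> 2 * (16 - b + 3 * e) / (b + e)"
  shows "poly (qpoly (of_real a1 - \<i> * of_real a2) b e) (\<i> * of_real y) =
     of_real (y^4 - c * y^2 + 1 - k * y * a2 * (1 + y^2))
     + \<i> * of_real (k * y * ((2 + e) * (1 - y^2) - a1 * (1 + y^2)))"
proof -
  have "\<i> * \<i> = -1" by simp
  then show ?thesis
    unfolding poly_qpoly_scaled k_def[symmetric] c_def[symmetric]
    unfolding of_real_add of_real_mult of_real_power of_real_diff of_real_1 of_real_numeral
    by algebra
qed

lemma qpoly_real_axis_notin_nonpos_Reals: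
  fixes a1 a2 b e x :: real
  assumes "e \<ge> 0" "b + e > 0" "a2 > 0" "x \<ge> 0"
  shows "poly (qpoly (of_real a1 - \<i> * of_real a2) b e) (of_real x) \<notin> \<real>\<^sub>\<le>\<^sub>0"
proof
  define k where "k = 4 / (b + e)"
  define c where "c = 2 * (16 - b + 3 * e) / (b + e)"
  assume "poly (qpoly (of_real a1 - \<i> * of_real a2) b e) (of_real x) \<in> \<real>\<^sub>\<le>\<^sub>0"
  then have re: "x^4 + k * x * ((2 + e) * (x^2 + 1) + a1 * (x^2 - 1)) + c * x^2 + 1 \<le> 0"
    and im: "k * x * a2 * (x^2 - 1) = 0"
    unfolding poly_qpoly_real_axis complex_nonpos_Reals_iff k_def c_def by simp_all
  have "k > 0" unfolding k_def using assms(2) by simp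
  with im assms(3,4) have "x = 0 \<or> x = 1"
    by (auto simp: power2_eq_1_iff)
  then show False
  proof
    assume "x = 1"
    have "k * (b + e) = 4" "c * (b + e) = 2 * (16 - b + 3 * e)"
      unfolding k_def c_def using assms(2) by (simp_all add: field_simps)
    moreover have "(2 + k * (2 * (2 + e)) + c) * (b + e) =
                     2 * (b + e) + 2 * (2 + e) * (k * (b + e)) + c * (b + e)"
      by (simp add: algebra_simps)
    ultimately have "(2 + k * (2 * (2 + e)) + c) * (b + e) > 0"
      using assms(1) by simp
    then have "2 + k * (2 * (2 + e)) + c > 0"
      using assms(2) zero_less_mult_pos2 by blast
    with re \<open>x = 1\<close> show False by (simp add: algebra_simps)
  qed (use re in simp)
qed

lemma qpoly_imag_axis_notin_nonpos_Reals:
  fixes a1 a2 b e y :: real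
  assumes "e \<ge> 0" "b + e > 0" "a1 > 2 + e" "y \<ge> 0"
  shows "poly (qpoly (of_real a1 - \<i> * of_real a2) b e) (\<i> * of_real y) \<notin> \<real>\<^sub>\<le>\<^sub>0"
proof
  define k where "k = 4 / (b + e)"
  define c where "c = 2 * (16 - b + 3 * e) / (b + e)"
  assume "poly (qpoly (of_real a1 - \<i> * of_real a2) b e) (\<i> * of_real y) \<in> \<real>\<^sub>\<le>\<^sub>0"
  then have re: "y^4 - c * y^2 + 1 - k * y * a2 * (1 + y^2) \<le> 0"
    and im: "k * y * ((2 + e) * (1 - y^2) - a1 * (1 + y^2)) = 0"
    unfolding poly_qpoly_imag_axis complex_nonpos_Reals_iff k_def c_def by simp_all
  show False
  proof (cases "y = 0")
    case False
    have "(2 + e) * (1 - y^2) \<le> (2 + e) * (1 + y^2)"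
      using assms(1) by (intro mult_left_mono) simp_all
    also have "\<dots> < a1 * (1 + y^2)"
      using assms(3) by (intro mult_strict_right_mono) (simp_all add: add_pos_nonneg)
    finally have "(2 + e) * (1 - y^2) - a1 * (1 + y^2) \<noteq> 0" by simp
    moreover have "k \<noteq> 0" unfolding k_def using assms(2) by simp
    ultimately show False using im False by simp
  qed (use re in simp)
qed

lemma qpoly_first_quadrant_root_count:
  fixes a1 a2 b e :: real
  assumes "e \<ge> 0" "b + e > 0" "a1 > 2 + e" "a2 > 0"
  shows "(\<Sum>z | poly (qpoly (of_real a1 - \<i> * of_real a2) b e) z = 0 \<and> Re z > 0 \<and> Im z > 0.
            order z (qpoly (of_real a1 - \<i> * of_real a2) b e)) = 1"
  using assms
  by (intro quartic_first_quadrant_root_count degree_qpoly coeff_qpoly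
      qpoly_real_axis_notin_nonpos_Reals qpoly_imag_axis_notin_nonpos_Reals)
     (simp_all add: degree_qpoly coeff_qpoly)

theorem mainTheorem10:
  fixes M a \<mu> :: real and m :: int and n l :: nat
  assumes "M > 0" and "0 < a" and "a < M" and "\<mu> > 0" and "m \<noteq> 0"
    and "l \<ge> nat \<bar>m\<bar>"
    and "alpha1 M a \<mu> m > 2 + epsK M a"
    and "0 < betaK M \<mu> l" and "betaK M \<mu> l < 8 + epsK M a"
  shows "(\<Sum>z\<in>{z. poly (qpoly (complex_of_real (alpha1 M a \<mu> m) - \<i> * complex_of_real (alpha2 M a \<mu> n))
                              (betaK M \<mu> l) (epsK M a)) z = 0 \<and> Re z > 0 \<and> Im z > 0}.
            order z (qpoly (complex_of_real (alpha1 M a \<mu> m) - \<i> * complex_of_real (alpha2 M a \<mu> n))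
                              (betaK M \<mu> l) (epsK M a))) = 1"
proof (rule qpoly_first_quadrant_root_count)
  have "a^2 < M^2" using assms(2,3) by (intro power_strict_mono) simp_all
  with \<open>M > 0\<close> have "sqrt (1 - a^2 / M^2) > 0" by simp
  then show "epsK M a \<ge> 0" and "alpha2 M a \<mu> n > 0"
    unfolding epsK_def alpha2_def using assms(1,4) by simp_all
  with \<open>0 < betaK M \<mu> l\<close> show "betaK M \<mu> l + epsK M a > 0" by simp
qed fact

end
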